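(* Let $a,b\ge1$, $P=[a]\times[b]$, $n=a+b$. For every $f\in(\mathbb R^+)^P$ and every $1\le k\le n-1$, $$Q(\tau^*_k f)=\sigma_k\,Q(f),$$ i.e. applying the birational toggles of the $k$-th file swaps the $k$-th and $(k+1)$-st entries of the quotient sequence and leaves the others unchanged.
   Context: $[a]\times[b]=\{(i,j)\in\mathbb Z^2:1\le i\le a,\ 1\le j\le b\}$ with the product order. Let $\widehat P=P\cup\{\hat0,\hat1\}$ with $\hat0<x<\hat1$ for all $x\in P$; write $y\lessdot x$ for covering relations; $x^+=\{y\in\widehat P:y\gtrdot x\}$, $x^-=\{y\in\widehat P:y\lessdot x\}$. Each $f:P\to\mathbb R^+$ is extended by $\hat f(\hat0)=\hat f(\hat1)=1$. Parallel sum: $s_1\parallel\cdots\parallel s_m=(1/s_1+\cdots+1/s_m)^{-1}$. The birational toggle $\tau_x$ changes only the value at $x$: $(\tau_xf)(x)=\frac{1}{f(x)}\bigl(\sum_{y\in x^-}\hat f(y)\bigr)\bigl(\|_{y\in x^+}\hat f(y)\bigr)$. The $k$-th file ($1\le k\le n-1$) is $\{(i,j)\in P:j-i+a=k\}$; $\tau^*_k$ is the composition of the (commuting) toggles $\tau_x$ over $x$ in file $k$. For $f\in(\mathbb R^+)^P$ let $p_k=\prod_{x\in\text{file }k}f(x)$ for $1\le k\le n-1$, $p_0=p_n=1$, $q_k=p_k/p_{k-1}$ for $1\le k\le n$; the quotient sequence is $Q(f)=(q_1,\dots,q_n)$. For $w=(w_1,\dots,w_n)$, $\sigma_k(w)=(w_1,\dots,w_{k-1},w_{k+1},w_k,w_{k+2},\dots,w_n)$.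 *)

theory Defs
  imports Complex_Main
begin

text \<open>The bounded poset: P with adjoined bottom and top.\<close>
datatype 'a hat = Bot | El 'a | Top

definition grid :: "nat \<Rightarrow> nat \<Rightarrow> (nat \<times> nat) set" where
  "grid a b = {(i, j). 1 \<le> i \<and> i \<le> a \<and> 1 \<le> j \<and> j \<le> b}"

definition prod_le :: "nat \<times> nat \<Rightarrow> nat \<times> nat \<Rightarrow> bool" where
  "prod_le p q \<longleftrightarrow> fst p \<le> fst q \<and> snd p \<le> snd q"

definition in_hat :: "(nat \<times> nat) set \<Rightarrow> (nat \<times> nat) hat \<Rightarrow> bool" where
  "in_hat P x \<longleftrightarrow> x = Bot \<or> x = Top \<or> (\<exists>p\<in>P. x = El p)"

fun hat_less :: "(nat \<times> nat) set \<Rightarrow> (nat \<times> nat) hat \<Rightarrow> (nat \<times> nat) hat \<Rightarrow> bool" where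
  "hat_less P Bot Top = True"
| "hat_less P Bot (El q) = (q \<in> P)"
| "hat_less P (El p) Top = (p \<in> P)"
| "hat_less P (El p) (El q) = (p \<in> P \<and> q \<in> P \<and> prod_le p q \<and> p \<noteq> q)"
| "hat_less P _ _ = False"

text \<open>Covering relation: covers P y x means y is covered by x in hat P.\<close>
definition covers :: "(nat \<times> nat) set \<Rightarrow> (nat \<times> nat) hat \<Rightarrow> (nat \<times> nat) hat \<Rightarrow> bool" where
  "covers P y x \<longleftrightarrow> in_hat P y \<and> in_hat P x \<and> hat_less P y x \<and>
      \<not> (\<exists>z. in_hat P z \<and> hat_less P y z \<and> hat_less P z x)"

definition up_set :: "(nat \<times> nat) set \<Rightarrow> nat \<times> nat \<Rightarrow> (nat \<times> nat) hat set" where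
  "up_set P x = {y. covers P (El x) y}"

definition down_set :: "(nat \<times> nat) set \<Rightarrow> nat \<times> nat \<Rightarrow> (nat \<times> nat) hat set" where
  "down_set P x = {y. covers P y (El x)}"

fun fhat :: "(nat \<times> nat \<Rightarrow> real) \<Rightarrow> (nat \<times> nat) hat \<Rightarrow> real" where
  "fhat f Bot = 1"
| "fhat f Top = 1"
| "fhat f (El p) = f p"

definition par_sum :: "('b \<Rightarrow> real) \<Rightarrow> 'b set \<Rightarrow> real" where
  "par_sum g S = 1 / (\<Sum>y\<in>S. 1 / g y)"

definition toggle :: "(nat \<times> nat) set \<Rightarrow> nat \<times> nat \<Rightarrow> (nat \<times> nat \<Rightarrow> real) \<Rightarrow> (nat \<times> nat \<Rightarrow> real)" where
  "toggle P x f = f(x := (1 / f x) * (\<Sum>y\<in>down_set P x. fhat f y) * par_sum (fhat f) (up_set P x))"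

definition grid_file :: "nat \<Rightarrow> nat \<Rightarrow> nat \<Rightarrow> (nat \<times> nat) set" where
  "grid_file a b k = {(i, j) \<in> grid a b. int j - int i + int a = int k}"

definition toggle_file :: "nat \<Rightarrow> nat \<Rightarrow> nat \<Rightarrow> (nat \<times> nat \<Rightarrow> real) \<Rightarrow> (nat \<times> nat \<Rightarrow> real)" where
  "toggle_file a b k f = fold (\<lambda>x g. toggle (grid a b) x g) [(i, j). i \<leftarrow> [1..<a + 1], j \<leftarrow> [1..<b + 1], (i, j) \<in> grid_file a b k] f"

definition file_prod :: "nat \<Rightarrow> nat \<Rightarrow> (nat \<times> nat \<Rightarrow> real) \<Rightarrow> nat \<Rightarrow> real" where
  "file_prod a b f k = (if k = 0 \<or> k = a + b then 1 else (\<Prod>x\<in>grid_file a b k. f x))"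

definition quot_seq :: "nat \<Rightarrow> nat \<Rightarrow> (nat \<times> nat \<Rightarrow> real) \<Rightarrow> real list" where
  "quot_seq a b f = map (\<lambda>k. file_prod a b f k / file_prod a b f (k - 1)) [1..<a + b + 1]"

definition sigma :: "nat \<Rightarrow> 'c list \<Rightarrow> 'c list" where
  "sigma k w = w[k - 1 := w ! k, k := w ! (k - 1)]"

end

theory Submission
  imports Defs
begin

(* Since the quotients q_m = p_m / p_(m-1) only see the file products p_m, and
   toggling file k only changes values on file k, everything reduces to the
   single identity  p'_k * p_k = p_(k-1) * p_(k+1)  for the new product p'_k.
   Each file consists of pairwise non-adjacent elements, so its toggles act
   independently and tau_x(f)(x) * f(x) = (sum over x^-) * (parallel sum
   over x^+).  Parametrising file k by a diagonal index t, the lower covers of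
   the t-th element are the t-th elements of files k+1 and k-1, and its upper
   covers are the (t+1)-st ones.  The product over t of
   (u_t + v_t) / (1/u_(t+1) + 1/v_(t+1)) telescopes, since
   (u + v) / (1/u + 1/v) = u v, with the adjoined bottom and top element
   accounting for the two ends. *)

lemma grid_mem [simp]: "(i, j) \<in> grid a b \<longleftrightarrow> 1 \<le> i \<and> i \<le> a \<and> 1 \<le> j \<and> j \<le> b"
  by (simp add: grid_def)

lemma grid_file_mem: "(i, j) \<in> grid_file a b k \<longleftrightarrow> (i, j) \<in> grid a b \<and> int j - int i + int a = int k"
  by (simp add: grid_file_def)

lemma grid_file_subset: "grid_file a b k \<subseteq> grid a b"
  by (auto simp: grid_file_def)

lemma covers_El_El:
  assumes "(i, j) \<in> grid a b" "q \<in> grid a b"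
  shows "covers (grid a b) (El (i, j)) (El q) \<longleftrightarrow> q = (i + 1, j) \<or> q = (i, j + 1)"
proof
  assume cov: "covers (grid a b) (El (i, j)) (El q)"
  obtain i' j' where q: "q = (i', j')" by (cases q)
  have le: "i \<le> i'" "j \<le> j'" "(i, j) \<noteq> q"
    using cov by (auto simp: covers_def prod_le_def q)
  have no_between: "\<not> (in_hat (grid a b) z \<and> hat_less (grid a b) (El (i, j)) z \<and> hat_less (grid a b) z (El q))" for z
    using cov unfolding covers_def by blast
  show "q = (i + 1, j) \<or> q = (i, j + 1)"
  proof (rule ccontr)
    assume far: "\<not> (q = (i + 1, j) \<or> q = (i, j + 1))"
    define z where "z = (if i < i' then (i + 1, j) else (i, j + 1))"
    have "in_hat (grid a b) (El z) \<and> hat_less (grid a b) (El (i, j)) (El z) \<and> hat_less (grid a b) (El z) (El q)"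
      using assms le far by (auto simp: z_def q in_hat_def prod_le_def)
    with no_between show False by blast
  qed
next
  assume "q = (i + 1, j) \<or> q = (i, j + 1)"
  moreover have "\<not> (hat_less (grid a b) (El (i, j)) z \<and> hat_less (grid a b) z (El q))" for z
    using \<open>q = (i + 1, j) \<or> q = (i, j + 1)\<close> by (cases z) (auto simp: prod_le_def)
  ultimately show "covers (grid a b) (El (i, j)) (El q)"
    using assms by (auto simp: covers_def in_hat_def prod_le_def)
qed

lemma covers_Bot_El:
  assumes "q \<in> grid a b"
  shows "covers (grid a b) Bot (El q) \<longleftrightarrow> q = (1, 1)"
proof
  assume cov: "covers (grid a b) Bot (El q)"
  show "q = (1, 1)"
  proof (rule ccontr)
    assume "q \<noteq> (1, 1)"
    then have "in_hat (grid a b) (El (1, 1)) \<and> hat_less (grid a b) Bot (El (1, 1)) \<and> hat_less (grid a b) (El (1, 1)) (El q)"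
      using assms by (cases q) (auto simp: in_hat_def prod_le_def)
    with cov show False unfolding covers_def by blast
  qed
next
  assume "q = (1, 1)"
  moreover have "\<not> (hat_less (grid a b) Bot z \<and> hat_less (grid a b) z (El (1, 1)))" for z
    by (cases z) (auto simp: prod_le_def)
  ultimately show "covers (grid a b) Bot (El q)"
    using assms by (auto simp: covers_def in_hat_def)
qed

lemma covers_El_Top:
  assumes "p \<in> grid a b"
  shows "covers (grid a b) (El p) Top \<longleftrightarrow> p = (a, b)"
proof
  assume cov: "covers (grid a b) (El p) Top"
  show "p = (a, b)"
  proof (rule ccontr)
    assume "p \<noteq> (a, b)"
    then have "in_hat (grid a b) (El (a, b)) \<and> hat_less (grid a b) (El p) (El (a, b)) \<and> hat_less (grid a b) (El (a, b)) Top"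
      using assms by (cases p) (auto simp: in_hat_def prod_le_def)
    with cov show False unfolding covers_def by blast
  qed
next
  assume "p = (a, b)"
  moreover have "\<not> (hat_less (grid a b) (El (a, b)) z \<and> hat_less (grid a b) z Top)" for z
    by (cases z) (auto simp: prod_le_def)
  ultimately show "covers (grid a b) (El p) Top"
    using assms by (auto simp: covers_def in_hat_def)
qed

lemma down_set_grid:
  assumes "(i, j) \<in> grid a b"
  shows "down_set (grid a b) (i, j) =
    El ` ({(i - 1, j), (i, j - 1)} \<inter> grid a b) \<union> (if (i, j) = (1, 1) then {Bot} else {})"
proof -
  have "covers (grid a b) (El (i', j')) (El (i, j)) \<longleftrightarrow> (i', j') \<in> {(i - 1, j), (i, j - 1)} \<inter> grid a b"
    for i' j'
  proof (cases "(i', j') \<in> grid a b")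
    case True
    then show ?thesis using covers_El_El[OF True assms] assms by auto
  qed (auto simp: covers_def in_hat_def)
  moreover have "\<not> covers (grid a b) Top (El (i, j))"
    by (simp add: covers_def)
  ultimately have "y \<in> down_set (grid a b) (i, j) \<longleftrightarrow>
      y \<in> El ` ({(i - 1, j), (i, j - 1)} \<inter> grid a b) \<union> (if (i, j) = (1, 1) then {Bot} else {})" for y
    using covers_Bot_El[OF assms] by (cases y) (auto simp: down_set_def)
  then show ?thesis by blast
qed

lemma up_set_grid:
  assumes "(i, j) \<in> grid a b"
  shows "up_set (grid a b) (i, j) =
    El ` ({(i, j + 1), (i + 1, j)} \<inter> grid a b) \<union> (if (i, j) = (a, b) then {Top} else {})"
proof -
  have "covers (grid a b) (El (i, j)) (El q) \<longleftrightarrow> q \<in> {(i, j + 1), (i + 1, j)} \<inter> grid a b" for q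
  proof (cases "q \<in> grid a b")
    case True
    then show ?thesis using covers_El_El[OF assms True] by auto
  qed (auto simp: covers_def in_hat_def)
  moreover have "\<not> covers (grid a b) (El (i, j)) Bot"
    by (simp add: covers_def)
  ultimately have "y \<in> up_set (grid a b) (i, j) \<longleftrightarrow>
      y \<in> El ` ({(i, j + 1), (i + 1, j)} \<inter> grid a b) \<union> (if (i, j) = (a, b) then {Top} else {})" for y
    using covers_El_Top[OF assms] by (cases y) (auto simp: up_set_def)
  then show ?thesis by blast
qed

text \<open>Sum of h over those of the two (distinct) points y, z that lie in P, where the
  empty sum is replaced by 1: this is the value of an adjoined bottom or top element.\<close>
definition nbsum :: "'a set \<Rightarrow> ('a \<Rightarrow> real) \<Rightarrow> 'a \<Rightarrow> 'a \<Rightarrow> real" where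
  "nbsum P h y z = (if y \<in> P then h y else 0) + (if z \<in> P then h z else 0)
     + (if y \<notin> P \<and> z \<notin> P then 1 else 0)"

definition toggle_value :: "nat \<Rightarrow> nat \<Rightarrow> (nat \<times> nat \<Rightarrow> real) \<Rightarrow> nat \<times> nat \<Rightarrow> real" where
  "toggle_value a b g x =
     (1 / g x) * (\<Sum>y\<in>down_set (grid a b) x. fhat g y) * par_sum (fhat g) (up_set (grid a b) x)"

lemma toggle_eq_update: "toggle (grid a b) x g = g(x := toggle_value a b g x)"
  by (simp add: toggle_def toggle_value_def)

lemma toggle_value_grid:
  assumes "(i, j) \<in> grid a b"
  shows "toggle_value a b g (i, j) =
    nbsum (grid a b) g (i - 1, j) (i, j - 1) / (g (i, j) * nbsum (grid a b) (\<lambda>x. 1 / g x) (i, j + 1) (i + 1, j))"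
proof -
  have corner_bot: "(i, j) = (1, 1) \<longleftrightarrow> (i - 1, j) \<notin> grid a b \<and> (i, j - 1) \<notin> grid a b"
    and corner_top: "(i, j) = (a, b) \<longleftrightarrow> (i, j + 1) \<notin> grid a b \<and> (i + 1, j) \<notin> grid a b"
    using assms by auto
  have "(\<Sum>y\<in>down_set (grid a b) (i, j). fhat g y) = nbsum (grid a b) g (i - 1, j) (i, j - 1)"
    unfolding down_set_grid[OF assms] nbsum_def corner_bot
    by (cases "(i - 1, j) \<in> grid a b"; cases "(i, j - 1) \<in> grid a b") auto
  moreover have "par_sum (fhat g) (up_set (grid a b) (i, j)) = 1 / nbsum (grid a b) (\<lambda>x. 1 / g x) (i, j + 1) (i + 1, j)"
    unfolding up_set_grid[OF assms] nbsum_def par_sum_def corner_top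
    by (cases "(i, j + 1) \<in> grid a b"; cases "(i + 1, j) \<in> grid a b") auto
  ultimately show ?thesis
    by (simp add: toggle_value_def)
qed

lemma toggle_value_local:
  assumes "(i, j) \<in> grid a b"
    and "\<forall>z\<in>{(i, j), (i - 1, j), (i, j - 1), (i, j + 1), (i + 1, j)}. g z = g' z"
  shows "toggle_value a b g (i, j) = toggle_value a b g' (i, j)"
  using assms by (simp add: toggle_value_grid nbsum_def)

text \<open>No two elements of a file are adjacent, so toggling inside a file never changes
  what another toggle of the same file reads.\<close>
lemma toggle_value_file_indep:
  assumes "y \<in> grid_file a b k" and "\<forall>z. z \<notin> grid_file a b k - {y} \<longrightarrow> g z = g' z"
  shows "toggle_value a b g y = toggle_value a b g' y"
proof -
  obtain i j where y: "y = (i, j)" by (cases y)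
  have "(i, j) \<in> grid a b" and "int j - int i + int a = int k"
    using assms(1) by (auto simp: y grid_file_mem)
  then have "z \<notin> grid_file a b k - {y}" if "z \<in> {(i, j), (i - 1, j), (i, j - 1), (i, j + 1), (i + 1, j)}" for z
    using that by (auto simp: y grid_file_mem)
  with assms(2) show ?thesis
    unfolding y by (intro toggle_value_local[OF \<open>(i, j) \<in> grid a b\<close>]) blast
qed

lemma fold_toggle_file:
  assumes "distinct xs" "set xs \<subseteq> grid_file a b k"
  shows "fold (\<lambda>x g. toggle (grid a b) x g) xs g = (\<lambda>y. if y \<in> set xs then toggle_value a b g y else g y)"
  using assms
proof (induction xs arbitrary: g)
  case (Cons x xs)
  let ?g = "toggle (grid a b) x g"
  have unchanged: "toggle_value a b ?g y = toggle_value a b g y" if "y \<in> set xs" for y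
    using that Cons.prems by (intro toggle_value_file_indep) (auto simp: toggle_eq_update)
  have "fold (\<lambda>x g. toggle (grid a b) x g) (x # xs) g = (\<lambda>y. if y \<in> set xs then toggle_value a b ?g y else ?g y)"
    using Cons by simp
  also have "\<dots> = (\<lambda>y. if y \<in> set (x # xs) then toggle_value a b g y else g y)"
    using unchanged Cons.prems by (auto simp: fun_eq_iff toggle_eq_update)
  finally show ?case .
qed simp

lemma list_comprehension_filter_product:
  "[(i, j). i \<leftarrow> xs, j \<leftarrow> ys, (i, j) \<in> S] = filter (\<lambda>p. p \<in> S) (List.product xs ys)"
proof (induction xs)
  case (Cons x xs)
  have "concat (map (\<lambda>j. if (x, j) \<in> S then [(x, j)] else []) ys) = filter (\<lambda>p. p \<in> S) (map (Pair x) ys)"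
    by (induction ys) auto
  with Cons show ?case by simp
qed simp

lemma toggle_file_eq:
  "toggle_file a b k f = (\<lambda>y. if y \<in> grid_file a b k then toggle_value a b f y else f y)"
proof -
  let ?xs = "[(i, j). i \<leftarrow> [1..<a + 1], j \<leftarrow> [1..<b + 1], (i, j) \<in> grid_file a b k]"
  have distinct: "distinct ?xs" and elements: "set ?xs = grid_file a b k"
    unfolding list_comprehension_filter_product by (auto simp: distinct_product grid_file_def)
  show ?thesis
    unfolding toggle_file_def fold_toggle_file[OF distinct equalityD1[OF elements]] elements ..
qed

text \<open>Extension of g by 1 outside P, the convention for the adjoined bottom and top.\<close>
definition ext_one :: "'a set \<Rightarrow> ('a \<Rightarrow> real) \<Rightarrow> 'a \<Rightarrow> real" where
  "ext_one P g y = (if y \<in> P then g y else 1)"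

lemma nbsum_boundary:
  assumes "\<not> (y \<in> P \<and> z \<in> P)"
  shows "nbsum P g y z = ext_one P g y * ext_one P g z"
    and "1 / nbsum P (\<lambda>x. 1 / g x) y z = ext_one P g y * ext_one P g z"
  using assms by (auto simp: nbsum_def ext_one_def)

lemma nbsum_interior:
  assumes "y \<in> P" "z \<in> P" "g y > 0" "g z > 0"
  shows "nbsum P g y z / nbsum P (\<lambda>x. 1 / g x) y z = ext_one P g y * ext_one P g z"
  using assms by (auto simp: nbsum_def ext_one_def field_simps)

lemma prod_ext_one_image:
  assumes "finite T" "inj_on \<phi> T" "\<phi> ` T \<inter> P = F"
  shows "(\<Prod>t\<in>T. ext_one P g (\<phi> t)) = (\<Prod>x\<in>F. g x)"
proof -
  have "(\<Prod>t\<in>T. ext_one P g (\<phi> t)) = (\<Prod>x\<in>\<phi> ` T. ext_one P g x)"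
    using prod.reindex[OF assms(2), of "ext_one P g"] by simp
  also have "\<dots> = (\<Prod>x\<in>{x \<in> \<phi> ` T. x \<in> P}. g x)"
    unfolding ext_one_def using assms(1) by (simp add: prod.inter_filter)
  finally show ?thesis
    using assms(3) by (simp add: Int_def)
qed

lemma prod_telescope:
  fixes s u :: "nat \<Rightarrow> 'a::comm_monoid_mult"
  assumes "L \<le> R"
  shows "(\<Prod>t\<in>{L..R}. s t * u (Suc t)) = s L * (\<Prod>t\<in>{Suc L..R}. s t * u t) * u (Suc R)"
proof -
  have "(\<Prod>t\<in>{L..R}. u (Suc t)) = (\<Prod>t\<in>{Suc L..R}. u t) * u (Suc R)"
    using assms by (simp add: prod.shift_bounds_cl_Suc_ivl[symmetric])
  moreover have "(\<Prod>t\<in>{L..R}. s t) = s L * (\<Prod>t\<in>{Suc L..R}. s t)"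
    using assms by (simp add: prod.atLeast_Suc_atMost)
  ultimately show ?thesis
    by (simp add: prod.distrib mult_ac)
qed

definition diag_pt :: "nat \<Rightarrow> nat \<Rightarrow> nat \<Rightarrow> nat \<times> nat" where
  "diag_pt d e t = (t - d, t - e)"

lemma inj_on_diag_pt: "\<forall>t\<in>T. e \<le> t \<Longrightarrow> inj_on (diag_pt d e) T"
  unfolding inj_on_def diag_pt_def by (metis Pair_inject diff_add)

lemma diag_pt_image:
  assumes "\<forall>t\<in>T. d \<le> t \<and> e \<le> t" and "\<forall>(i, j)\<in>grid_file a b c. i + d \<in> T"
    and "int c = int d - int e + int a"
  shows "diag_pt d e ` T \<inter> grid a b = grid_file a b c"
proof
  show "diag_pt d e ` T \<inter> grid a b \<subseteq> grid_file a b c"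
    using assms(1,3) by (auto simp: diag_pt_def grid_file_mem)
  show "grid_file a b c \<subseteq> diag_pt d e ` T \<inter> grid a b"
  proof
    fix p assume p: "p \<in> grid_file a b c"
    obtain i j where ij: "p = (i, j)" by (cases p)
    have "diag_pt d e (i + d) = p"
      using p assms(3) by (auto simp: ij diag_pt_def grid_file_mem)
    then show "p \<in> diag_pt d e ` T \<inter> grid a b"
      using p assms(2) grid_file_subset ij by (metis (lifting) IntI case_prodD image_eqI subsetD)
  qed
qed

text \<open>Fix a file k with 1 \<le> k \<le> a + b - 1.  Its t-th element is diag_pt k a t for
  t from lo to hi; the lower covers of that element are the t-th elements
  diag_pt (k+1) a t of file k+1 and diag_pt k (a+1) t of file k-1, its upper covers
  the (t+1)-st ones.\<close>
context
  fixes a b k :: nat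
  assumes a_pos: "1 \<le> a" and b_pos: "1 \<le> b" and k_pos: "1 \<le> k" and k_less: "k \<le> a + b - 1"
begin

definition lo :: nat where "lo = max k a + 1"
definition hi :: nat where "hi = min (a + k) (a + b)"

lemma lo_le_hi: "lo \<le> hi"
  using a_pos b_pos k_pos k_less unfolding lo_def hi_def by arith

lemma file_as_diagonal: "diag_pt k a ` {lo..hi} = grid_file a b k"
proof -
  have "diag_pt k a ` {lo..hi} \<subseteq> grid a b"
    using a_pos b_pos k_pos k_less by (auto simp: diag_pt_def lo_def hi_def)
  moreover have "diag_pt k a ` {lo..hi} \<inter> grid a b = grid_file a b k"
    by (rule diag_pt_image) (auto simp: lo_def hi_def grid_file_mem)
  ultimately show ?thesis by blast
qed

lemma upper_file_as_diagonal: "diag_pt (k + 1) a ` {lo..Suc hi} \<inter> grid a b = grid_file a b (k + 1)"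
  by (rule diag_pt_image) (auto simp: lo_def hi_def grid_file_mem)

lemma lower_file_as_diagonal: "diag_pt k (a + 1) ` {lo..Suc hi} \<inter> grid a b = grid_file a b (k - 1)"
  using k_pos by (intro diag_pt_image) (auto simp: lo_def hi_def grid_file_mem)

lemma diagonal_ends:
  "\<not> (diag_pt (k + 1) a lo \<in> grid a b \<and> diag_pt k (a + 1) lo \<in> grid a b)"
  "\<not> (diag_pt (k + 1) a (Suc hi) \<in> grid a b \<and> diag_pt k (a + 1) (Suc hi) \<in> grid a b)"
  by (auto simp: diag_pt_def lo_def hi_def)

lemma diagonal_interior:
  assumes "t \<in> {Suc lo..hi}"
  shows "diag_pt (k + 1) a t \<in> grid a b" "diag_pt k (a + 1) t \<in> grid a b"
  using assms by (auto simp: diag_pt_def lo_def hi_def)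

lemma toggle_value_diagonal:
  assumes "t \<in> {lo..hi}" and "f (diag_pt k a t) \<noteq> 0"
  shows "toggle_value a b f (diag_pt k a t) * f (diag_pt k a t) =
    nbsum (grid a b) f (diag_pt (k + 1) a t) (diag_pt k (a + 1) t) /
    nbsum (grid a b) (\<lambda>x. 1 / f x) (diag_pt (k + 1) a (Suc t)) (diag_pt k (a + 1) (Suc t))"
proof -
  have "diag_pt k a t \<in> grid a b"
    using assms(1) file_as_diagonal grid_file_subset by blast
  moreover have "t \<ge> k + 1" "t \<ge> a + 1"
    using assms(1) by (auto simp: lo_def)
  ultimately show ?thesis
    using assms(2) by (simp add: diag_pt_def toggle_value_grid Suc_diff_le)
qed

lemma adjacent_files_product:
  "(\<Prod>t\<in>{lo..Suc hi}. ext_one (grid a b) f (diag_pt (k + 1) a t) * ext_one (grid a b) f (diag_pt k (a + 1) t)) =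
    (\<Prod>x\<in>grid_file a b (k - 1). f x) * (\<Prod>x\<in>grid_file a b (k + 1). f x)"
proof -
  have "inj_on (diag_pt d e) {lo..Suc hi}" if "e \<le> a + 1" for d e
    using that by (intro inj_on_diag_pt) (auto simp: lo_def)
  then show ?thesis
    using prod_ext_one_image[OF _ _ lower_file_as_diagonal] prod_ext_one_image[OF _ _ upper_file_as_diagonal]
    by (simp add: prod.distrib mult.commute)
qed

lemma file_product_toggle:
  assumes pos: "\<forall>x\<in>grid a b. f x > 0"
  shows "(\<Prod>x\<in>grid_file a b k. toggle_value a b f x * f x) =
    (\<Prod>x\<in>grid_file a b (k - 1). f x) * (\<Prod>x\<in>grid_file a b (k + 1). f x)"
proof -
  let ?up = "diag_pt (k + 1) a" and ?dn = "diag_pt k (a + 1)" and ?P = "grid a b"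
  define S where "S t = nbsum ?P f (?up t) (?dn t)" for t
  define R where "R t = 1 / nbsum ?P (\<lambda>x. 1 / f x) (?up t) (?dn t)" for t
  define E where "E t = ext_one ?P f (?up t) * ext_one ?P f (?dn t)" for t
  have "(\<Prod>x\<in>grid_file a b k. toggle_value a b f x * f x) =
      (\<Prod>t\<in>{lo..hi}. toggle_value a b f (diag_pt k a t) * f (diag_pt k a t))"
    unfolding file_as_diagonal[symmetric]
    by (rule prod.reindex[unfolded comp_def], rule inj_on_diag_pt) (auto simp: lo_def)
  also have "\<dots> = (\<Prod>t\<in>{lo..hi}. S t * R (Suc t))"
  proof (rule prod.cong[OF refl])
    fix t assume t: "t \<in> {lo..hi}"
    then have "f (diag_pt k a t) > 0"
      using pos file_as_diagonal grid_file_subset by blast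
    then show "toggle_value a b f (diag_pt k a t) * f (diag_pt k a t) = S t * R (Suc t)"
      using toggle_value_diagonal[OF t] by (simp add: S_def R_def)
  qed
  also have "\<dots> = S lo * (\<Prod>t\<in>{Suc lo..hi}. S t * R t) * R (Suc hi)"
    by (rule prod_telescope[OF lo_le_hi])
  also have "\<dots> = E lo * (\<Prod>t\<in>{Suc lo..hi}. E t) * E (Suc hi)"
  proof -
    have "S t * R t = E t" if "t \<in> {Suc lo..hi}" for t
      using diagonal_interior[OF that] pos
      by (simp add: S_def R_def E_def nbsum_interior)
    moreover have "S lo = E lo"
      unfolding S_def E_def using diagonal_ends(1) by (rule nbsum_boundary(1))
    moreover have "R (Suc hi) = E (Suc hi)"
      unfolding R_def E_def using diagonal_ends(2) by (rule nbsum_boundary(2))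
    ultimately show ?thesis
      by simp
  qed
  also have "\<dots> = (\<Prod>t\<in>{lo..Suc hi}. E t)"
    using lo_le_hi by (simp add: prod.atLeast_Suc_atMost mult_ac)
  finally show ?thesis
    unfolding E_def adjacent_files_product .
qed

end

text \<open>The convention p_0 = p_n = 1 agrees with the (empty) products over files 0 and n.\<close>
lemma file_prod_eq: "file_prod a b g m = (\<Prod>x\<in>grid_file a b m. g x)"
proof -
  have "grid_file a b 0 = {}" "grid_file a b (a + b) = {}"
    by (auto simp: grid_file_def)
  then show ?thesis
    by (auto simp: file_prod_def)
qed

lemma file_prod_pos: "\<forall>x\<in>grid a b. f x > 0 \<Longrightarrow> file_prod a b f m > 0"
  unfolding file_prod_eq using grid_file_subset by (intro prod_pos) blast

lemma file_prod_toggle_other: "m \<noteq> k \<Longrightarrow> file_prod a b (toggle_file a b k f) m = file_prod a b f m"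
  unfolding file_prod_eq toggle_file_eq by (rule prod.cong) (auto simp: grid_file_def)

lemma file_prod_toggle_same:
  assumes "1 \<le> a" "1 \<le> b" "1 \<le> k" "k \<le> a + b - 1" and "\<forall>x\<in>grid a b. f x > 0"
  shows "file_prod a b (toggle_file a b k f) k * file_prod a b f k = file_prod a b f (k - 1) * file_prod a b f (k + 1)"
proof -
  have "file_prod a b (toggle_file a b k f) k * file_prod a b f k =
      (\<Prod>x\<in>grid_file a b k. toggle_value a b f x * f x)"
    unfolding file_prod_eq toggle_file_eq prod.distrib by simp
  then show ?thesis
    using file_product_toggle[OF assms] by (simp add: file_prod_eq)
qed

lemma sigma_nth:
  assumes "1 \<le> k" "k < length w" "m < length w"
  shows "sigma k w ! m = (if m = k - 1 then w ! k else if m = k then w ! (k - 1) else w ! m)"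
  using assms by (simp add: sigma_def nth_list_update)

lemma quotients_swap:
  fixes p p' :: "nat \<Rightarrow> real"
  assumes "1 \<le> k" "k < n" and nonzero: "\<forall>m. p m \<noteq> 0"
    and same: "\<forall>m. m \<noteq> k \<longrightarrow> p' m = p m" and changed: "p' k * p k = p (k - 1) * p (k + 1)"
  shows "map (\<lambda>m. p' m / p' (m - 1)) [1..<n + 1] = sigma k (map (\<lambda>m. p m / p (m - 1)) [1..<n + 1])"
    (is "?q' = sigma k ?q")
proof (rule nth_equalityI)
  show "length ?q' = length (sigma k ?q)"
    by (simp add: sigma_def del: upt_Suc)
next
  fix m assume "m < length ?q'"
  then have m: "m < n" by (simp del: upt_Suc)
  have q: "?q ! i = p (Suc i) / p i" and q': "?q' ! i = p' (Suc i) / p' i" if "i < n" for i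
    using that by (simp_all add: nth_append del: upt_Suc)
  have sigma_nth: "sigma k ?q ! m = (if m = k - 1 then ?q ! k else if m = k then ?q ! (k - 1) else ?q ! m)"
    using assms(1,2) m by (intro sigma_nth) (simp_all del: upt_Suc)
  have p'k: "p' k = p (k - 1) * p (k + 1) / p k"
    using changed nonzero by (simp add: field_simps)
  consider "m = k - 1" | "m = k" | "m \<noteq> k - 1" "m \<noteq> k" by blast
  then show "?q' ! m = sigma k ?q ! m"
  proof cases
    case 1
    then have "?q' ! m = p' k / p (k - 1)"
      using q' m assms(1) same by simp
    also have "\<dots> = ?q ! k"
      using q assms(2) p'k nonzero by simp
    finally show ?thesis
      using 1 sigma_nth by simp
  next
    case 2
    then have "?q' ! m = p (k + 1) / p' k"
      using q' m same by simp
    also have "\<dots> = ?q ! (k - 1)"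
      using q assms(1,2) p'k nonzero by simp
    finally show ?thesis
      using 2 sigma_nth by simp
  next
    case 3
    then show ?thesis
      using q q' sigma_nth same m by simp
  qed
qed

theorem lemma6:
  fixes a b k :: nat and f :: "nat \<times> nat \<Rightarrow> real"
  assumes "1 \<le> a" and "1 \<le> b"
    and "\<forall>x\<in>grid a b. f x > 0"
    and "1 \<le> k" and "k \<le> a + b - 1"
  shows "quot_seq a b (toggle_file a b k f) = sigma k (quot_seq a b f)"
proof -
  have "k < a + b"
    using assms by simp
  moreover have "\<forall>m. file_prod a b f m \<noteq> 0"
    using file_prod_pos[OF assms(3)] by (simp add: less_imp_neq[symmetric])
  moreover have "\<forall>m. m \<noteq> k \<longrightarrow> file_prod a b (toggle_file a b k f) m = file_prod a b f m"
    by (simp add: file_prod_toggle_other)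
  ultimately show ?thesis
    unfolding quot_seq_def
    using quotients_swap[OF assms(4)] file_prod_toggle_same[OF assms(1,2,4,5,3)] by blast
qed

end
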